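(* For integers $n \geq j \geq k \geq 0$, $$f_{(n,j,k),j+k}(q) = q^{j^2+jk+k^2} \left( \begin{bmatrix} n \\ j \end{bmatrix}_q \begin{bmatrix} n \\ k \end{bmatrix}_q - q^{j-k+1} \begin{bmatrix} n \\ j+1 \end{bmatrix}_q \begin{bmatrix} n \\ k-1 \end{bmatrix}_q \right).$$
   Context: For a partition $\lambda\vdash N$, a standard Young tableau of shape $\lambda$ is a filling of the Ferrers diagram with $1,\dots,N$, increasing along rows and down columns; it has a descent at $m$ if $m+1$ lies in a strictly lower row than $m$; $\mathrm{des}$ is the number of descents and $\mathrm{maj}$ their sum. $f_{\lambda,i}(q)=\sum q^{\mathrm{maj}(\tau)}$ over standard Young tableaux of shape $\lambda$ with $\mathrm{des}(\tau)=i$. The $q$-binomial coefficient is $\frac{(q)_M}{(q)_N(q)_{M-N}}$, $(q)_m=(1-q)\cdots(1-q^m)$, for integers $0\le N\le M$, and $0$ otherwise. *)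

theory Defs
  imports "HOL-Computational_Algebra.Polynomial"
begin

text \<open>A partition is given as a (weakly decreasing) list of row lengths; row r
  (0-based) of the Ferrers diagram has the cells (r,c) with c < lam ! r.\<close>

definition cells :: "nat list \<Rightarrow> (nat \<times> nat) set" where
  "cells lam = {(r, c). r < length lam \<and> c < lam ! r}"

text \<open>Standard Young tableaux of shape lam: bijective fillings of the diagram
  with 1..N, increasing along rows and down columns (extended by 0 outside the
  diagram, so that the set of tableaux is finite).\<close>

definition syt :: "nat list \<Rightarrow> (nat \<times> nat \<Rightarrow> nat) set" where
  "syt lam = {T. bij_betw T (cells lam) {1..sum_list lam}
      \<and> (\<forall>x. x \<notin> cells lam \<longrightarrow> T x = 0)
      \<and> (\<forall>r c. (r, Suc c) \<in> cells lam \<longrightarrow> T (r, c) < T (r, Suc c))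
      \<and> (\<forall>r c. (Suc r, c) \<in> cells lam \<longrightarrow> T (r, c) < T (Suc r, c))}"

definition row_of :: "nat list \<Rightarrow> (nat \<times> nat \<Rightarrow> nat) \<Rightarrow> nat \<Rightarrow> nat" where
  "row_of lam T m = fst (the_inv_into (cells lam) T m)"

definition descents :: "nat list \<Rightarrow> (nat \<times> nat \<Rightarrow> nat) \<Rightarrow> nat set" where
  "descents lam T = {m. 1 \<le> m \<and> m < sum_list lam \<and> row_of lam T m < row_of lam T (Suc m)}"

definition des :: "nat list \<Rightarrow> (nat \<times> nat \<Rightarrow> nat) \<Rightarrow> nat" where
  "des lam T = card (descents lam T)"

definition maj :: "nat list \<Rightarrow> (nat \<times> nat \<Rightarrow> nat) \<Rightarrow> nat" where
  "maj lam T = \<Sum> (descents lam T)"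

definition fpoly :: "nat list \<Rightarrow> nat \<Rightarrow> rat poly" where
  "fpoly lam i = (\<Sum>T\<in>{T \<in> syt lam. des lam T = i}. monom 1 (maj lam T))"

definition qpoch :: "nat \<Rightarrow> rat poly" where
  "qpoch m = (\<Prod>i\<in>{1..m}. 1 - monom 1 i)"

definition qbinom :: "int \<Rightarrow> int \<Rightarrow> rat poly" where
  "qbinom M N = (if 0 \<le> N \<and> N \<le> M
     then qpoch (nat M) div (qpoch (nat N) * qpoch (nat (M - N))) else 0)"

end

theory Submission
  imports Defs
begin

text \<open>Removing the largest entry N of a standard Young tableau T of shape \<lambda> leaves a tableau T'
  of the shape obtained by deleting a corner cell, and N - 1 is a descent of T exactly when it lies
  strictly above the row of N. Hence des T \<le> |\<lambda>| - \<lambda>_1, and f_((n,j,k),j+k) counts the tableaux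
  attaining this bound. Recording the row of the largest entry, the maj-generating function F(a,b,c)
  of these extremal tableaux satisfies
    F(a,b,c) = F(a-1,b,c) + q^M F(a-1,b-1,c) + q^M F(a-1,b,c-1) + q^(2M-1) F(a-1,b-1,c-1)
  with M = a + b + c - 1. By the q-Pascal rule the claimed right-hand side obeys the same recursion,
  and it vanishes on the boundary of the region n \<ge> j \<ge> k \<ge> 0, so induction on n finishes.\<close>

section \<open>Gaussian binomial coefficients\<close>

lemma qpoch_Suc: "qpoch (Suc n) = qpoch n * (1 - monom 1 (Suc n))"
  unfolding qpoch_def by (simp add: atLeastAtMostSuc_conv mult.commute)

lemma qpoch_nonzero: "qpoch n \<noteq> 0"
proof (induction n)
  case 0
  show ?case by (simp add: qpoch_def)
next
  case (Suc n)
  have "coeff (1 - monom (1::rat) (Suc n)) 0 \<noteq> 0"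
    by simp
  then have "1 - monom (1::rat) (Suc n) \<noteq> 0"
    by force
  with Suc show ?case
    by (simp add: qpoch_Suc)
qed

fun qbin :: "nat \<Rightarrow> nat \<Rightarrow> rat poly" where
  "qbin n 0 = 1"
| "qbin 0 (Suc k) = 0"
| "qbin (Suc n) (Suc k) = qbin n (Suc k) + monom 1 (n - k) * qbin n k"

lemma qbin_eq_0: "n < k \<Longrightarrow> qbin n k = 0"
  by (induction n k rule: qbin.induct) auto

lemma qbin_mult_qpoch: "k \<le> n \<Longrightarrow> qbin n k * qpoch k * qpoch (n - k) = qpoch n"
proof (induction n arbitrary: k)
  case 0
  then show ?case by (simp add: qpoch_def)
next
  case (Suc n)
  show ?case
  proof (cases k)
    case 0
    then show ?thesis by (simp add: qpoch_def)
  next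
    case (Suc i)
    with Suc.prems have "i \<le> n" by simp
    have lower: "qbin n i * qpoch (Suc i) * qpoch (n - i) = qpoch n * (1 - monom 1 (Suc i))"
      using Suc.IH[OF \<open>i \<le> n\<close>] by (simp add: qpoch_Suc algebra_simps)
    have upper: "qbin n (Suc i) * qpoch (Suc i) * qpoch (n - i) = qpoch n * (1 - monom 1 (n - i))"
    proof (cases "i = n")
      case True
      then show ?thesis by (simp add: qbin_eq_0)
    next
      case False
      with \<open>i \<le> n\<close> have "Suc i \<le> n" and "n - i = Suc (n - Suc i)" by simp_all
      then have "qpoch (n - i) = qpoch (n - Suc i) * (1 - monom 1 (n - i))"
        by (simp add: qpoch_Suc)
      then show ?thesis
        using Suc.IH[OF \<open>Suc i \<le> n\<close>] by (metis mult.assoc)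
    qed
    have "qbin (Suc n) k * qpoch k * qpoch (Suc n - k)
        = qbin n (Suc i) * qpoch (Suc i) * qpoch (n - i)
          + monom 1 (n - i) * (qbin n i * qpoch (Suc i) * qpoch (n - i))"
      using Suc by (simp add: algebra_simps)
    also have "\<dots> = qpoch n * (1 - monom 1 (n - i) * monom 1 (Suc i))"
      unfolding lower upper by (simp add: algebra_simps)
    also have "\<dots> = qpoch (Suc n)"
      using \<open>i \<le> n\<close> by (simp add: mult_monom qpoch_Suc)
    finally show ?thesis .
  qed
qed

lemma qbinom_of_nat: "qbinom (int n) (int k) = qbin n k"
proof (cases "k \<le> n")
  case True
  have "qpoch n = qbin n k * (qpoch k * qpoch (n - k))"
    using qbin_mult_qpoch[OF True] by (simp add: algebra_simps)
  moreover have "qpoch k * qpoch (n - k) \<noteq> 0"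
    by (simp add: qpoch_nonzero)
  ultimately show ?thesis
    using True by (simp add: qbinom_def nat_diff_distrib del: div_mult_self1 div_mult_self2)
next
  case False
  then show ?thesis by (simp add: qbinom_def qbin_eq_0)
qed

lemma qbinom_nonzero_range: "qbinom M N \<noteq> 0 \<Longrightarrow> 0 \<le> N \<and> N \<le> M"
  by (auto simp: qbinom_def split: if_splits)

lemma qbinom_Pascal:
  "qbinom (int (Suc m)) j = qbinom (int m) j + monom 1 (nat (int m + 1 - j)) * qbinom (int m) (j - 1)"
proof -
  have "j < 0 \<or> j = 0 \<or> j = int (Suc (nat j - 1))"
    by linarith
  then consider "j < 0" | "j = 0" | i where "j = int (Suc i)"
    by blast
  then show ?thesis
  proof cases
    case 1
    then show ?thesis by (simp add: qbinom_def)
  next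
    case 2
    then show ?thesis by (simp add: qbinom_def qpoch_nonzero)
  next
    case 3
    have "nat (int m + 1 - j) = m - i" and "j - 1 = int i"
      using 3 by simp_all
    show ?thesis
      unfolding \<open>j - 1 = int i\<close> \<open>nat (int m + 1 - j) = m - i\<close>
      unfolding 3 qbinom_of_nat by simp
  qed
qed

lemma monom_nat_add_on_support:
  fixes P :: "'a::comm_semiring_1 poly"
  assumes "P \<noteq> 0 \<Longrightarrow> 0 \<le> x \<and> 0 \<le> y"
  shows "monom 1 (nat x) * (monom 1 (nat y) * P) = monom 1 (nat (x + y)) * P"
  using assms by (cases "P = 0") (simp_all add: mult.assoc[symmetric] mult_monom nat_add_distrib)

lemma monom_nat_exchange:
  fixes P :: "'a::comm_semiring_1 poly"
  assumes "P \<noteq> 0 \<Longrightarrow> 0 \<le> x \<and> 0 \<le> y \<and> 0 \<le> z \<and> 0 \<le> w" and "x + y = z + w"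
  shows "monom 1 (nat x) * (monom 1 (nat y) * P) = monom 1 (nat z) * (monom 1 (nat w) * P)"
  using monom_nat_add_on_support[of P x y] monom_nat_add_on_support[of P z w] assms by auto

lemma mult_qbinom_nonzero_range:
  "qbinom (int m) a * qbinom (int m) b \<noteq> 0 \<Longrightarrow> 0 \<le> a \<and> a \<le> int m \<and> 0 \<le> b \<and> b \<le> int m"
  using qbinom_nonzero_range[of "int m" a] qbinom_nonzero_range[of "int m" b] by auto

lemma quadratic_form_nonneg: "0 \<le> (a::int)\<^sup>2 + a * b + b\<^sup>2"
proof -
  have "2 * (a\<^sup>2 + a * b + b\<^sup>2) = a\<^sup>2 + b\<^sup>2 + (a + b)\<^sup>2"
    by (simp add: power2_eq_square algebra_simps)
  then show ?thesis
    by (smt (verit) zero_le_power2)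
qed

text \<open>qdet n j k below is the right-hand side of the theorem. Integer indices make the q-Pascal
  recursion uniform: qbinom vanishes outside 0..n, so no boundary cases arise.\<close>

definition qterm :: "nat \<Rightarrow> int \<Rightarrow> int \<Rightarrow> rat poly" where
  "qterm n j k = monom 1 (nat (j\<^sup>2 + j * k + k\<^sup>2)) * qbinom (int n) j * qbinom (int n) k"

lemma qterm_Suc:
  "qterm (Suc m) j k = qterm m j k
     + monom 1 (nat (int m + j + k)) * qterm m (j - 1) k
     + monom 1 (nat (int m + j + k)) * qterm m j (k - 1)
     + monom 1 (nat (2 * (int m + j + k) - 1)) * qterm m (j - 1) (k - 1)"
proof -
  define e :: "int \<Rightarrow> int \<Rightarrow> int" where "e a b = a\<^sup>2 + a * b + b\<^sup>2" for a b
  define Q where "Q a b = qbinom (int m) a * qbinom (int m) b" for a b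
  define x where "x a = monom (1::rat) (nat (int m + 1 - a))" for a
  have e_nonneg: "0 \<le> e a b" for a b
    unfolding e_def by (rule quadratic_form_nonneg)
  have e_shift: "e a b = e (a - 1) b + 2 * a + b - 1" "e a b = e a (b - 1) + a + 2 * b - 1"
      "e a b = e (a - 1) (b - 1) + 3 * a + 3 * b - 3" for a b
    by (simp_all add: e_def power2_eq_square algebra_simps)
  have range: "Q a b \<noteq> 0 \<Longrightarrow> 0 \<le> a \<and> a \<le> int m \<and> 0 \<le> b \<and> b \<le> int m" for a b
    unfolding Q_def by (rule mult_qbinom_nonzero_range)
  have qterm_m: "qterm m a b = monom 1 (nat (e a b)) * Q a b" for a b
    by (simp add: qterm_def e_def Q_def mult.assoc)
  have "qterm (Suc m) j k = monom 1 (nat (e j k)) * Q j k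
      + monom 1 (nat (e j k)) * (x j * Q (j - 1) k)
      + monom 1 (nat (e j k)) * (x k * Q j (k - 1))
      + monom 1 (nat (e j k)) * (x j * (x k * Q (j - 1) (k - 1)))"
    unfolding qterm_def qbinom_Pascal e_def Q_def x_def by (simp add: algebra_simps)
  also have "\<dots> = qterm m j k
      + monom 1 (nat (int m + j + k)) * qterm m (j - 1) k
      + monom 1 (nat (int m + j + k)) * qterm m j (k - 1)
      + monom 1 (nat (2 * (int m + j + k) - 1)) * qterm m (j - 1) (k - 1)"
  proof -
    have xx: "x j * (x k * Q (j - 1) (k - 1)) = monom 1 (nat (int m + 1 - j + (int m + 1 - k))) * Q (j - 1) (k - 1)"
      unfolding x_def by (subst monom_nat_add_on_support) (auto dest: range)
    have shift_j: "monom 1 (nat (e j k)) * (x j * Q (j - 1) k)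
        = monom 1 (nat (int m + j + k)) * (monom 1 (nat (e (j - 1) k)) * Q (j - 1) k)"
      unfolding x_def
      by (rule monom_nat_exchange)
        (use e_nonneg[of j k] e_nonneg[of "j - 1" k] e_shift(1)[of j k] in \<open>auto dest: range\<close>)
    have shift_k: "monom 1 (nat (e j k)) * (x k * Q j (k - 1))
        = monom 1 (nat (int m + j + k)) * (monom 1 (nat (e j (k - 1))) * Q j (k - 1))"
      unfolding x_def
      by (rule monom_nat_exchange)
        (use e_nonneg[of j k] e_nonneg[of j "k - 1"] e_shift(2)[of j k] in \<open>auto dest: range\<close>)
    have shift_jk: "monom 1 (nat (e j k)) * (monom 1 (nat (int m + 1 - j + (int m + 1 - k))) * Q (j - 1) (k - 1))
        = monom 1 (nat (2 * (int m + j + k) - 1)) * (monom 1 (nat (e (j - 1) (k - 1))) * Q (j - 1) (k - 1))"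
      by (rule monom_nat_exchange)
        (use e_nonneg[of j k] e_nonneg[of "j - 1" "k - 1"] e_shift(3)[of j k] in \<open>auto dest: range\<close>)
    show ?thesis
      by (simp only: qterm_m xx shift_j shift_k shift_jk)
  qed
  finally show ?thesis .
qed

definition qdet :: "nat \<Rightarrow> int \<Rightarrow> int \<Rightarrow> rat poly" where
  "qdet n j k = qterm n j k - qterm n (j + 1) (k - 1)"

lemma qdet_Suc:
  "qdet (Suc m) j k = qdet m j k
     + monom 1 (nat (int m + j + k)) * qdet m (j - 1) k
     + monom 1 (nat (int m + j + k)) * qdet m j (k - 1)
     + monom 1 (nat (2 * (int m + j + k) - 1)) * qdet m (j - 1) (k - 1)"
  using qterm_Suc[of m j k] qterm_Suc[of m "j + 1" "k - 1"]
  by (simp add: qdet_def algebra_simps)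

lemma qdet_0_0_0: "qdet 0 0 0 = 1"
  by (simp add: qdet_def qterm_def qbinom_def qpoch_def)

lemma qdet_row_overflow: "qdet m (int m + 1) k = 0"
  by (simp add: qdet_def qterm_def qbinom_def)

lemma qdet_diagonal: "qdet m j (j + 1) = 0"
  by (simp add: qdet_def qterm_def algebra_simps power2_eq_square)

lemma qdet_minus_one: "qdet m j (- 1) = 0"
  by (simp add: qdet_def qterm_def qbinom_def)

lemma qdet_Suc_nat:
  assumes "c \<le> b"
  shows "qdet (Suc m) (int b) (int c) = qdet m (int b) (int c)
      + (if c < b then monom 1 (m + b + c) * qdet m (int b - 1) (int c) else 0)
      + (if 0 < c then monom 1 (m + b + c) * (qdet m (int b) (int c - 1)
           + monom 1 (m + b + c - 1) * qdet m (int b - 1) (int c - 1)) else 0)"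
proof -
  let ?M = "m + b + c"
  have M: "nat (int m + int b + int c) = ?M"
    by (simp only: of_nat_add[symmetric] nat_int)
  have diagonal: "\<not> c < b \<Longrightarrow> qdet m (int b - 1) (int c) = 0"
    using assms qdet_diagonal[of m "int b - 1"] by simp
  show ?thesis
  proof (cases "0 < c")
    case True
    then have "nat (2 * (int m + int b + int c) - 1) = ?M + (?M - 1)"
      by (simp add: nat_eq_iff of_nat_diff)
    then have double: "monom (1::rat) (nat (2 * (int m + int b + int c) - 1)) = monom 1 ?M * monom 1 (?M - 1)"
      by (simp add: mult_monom)
    show ?thesis
      unfolding qdet_Suc[of m "int b" "int c"] M double
      using True diagonal by (cases "c < b") (simp_all add: algebra_simps)
  next
    case False
    then show ?thesis
      unfolding qdet_Suc[of m "int b" "int c"] M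
      using diagonal qdet_minus_one by (cases "c < b") simp_all
  qed
qed

section \<open>Removing the largest entry of a standard Young tableau\<close>

definition is_partition :: "nat list \<Rightarrow> bool" where
  "is_partition lam \<longleftrightarrow> (\<forall>i. Suc i < length lam \<longrightarrow> lam ! Suc i \<le> lam ! i)"

definition is_corner :: "nat list \<Rightarrow> nat \<Rightarrow> bool" where
  "is_corner lam r \<longleftrightarrow> r < length lam \<and> 0 < lam ! r \<and> (Suc r < length lam \<longrightarrow> lam ! Suc r < lam ! r)"

abbreviation corner_cell :: "nat list \<Rightarrow> nat \<Rightarrow> nat \<times> nat" where
  "corner_cell lam r \<equiv> (r, lam ! r - 1)"

definition remove_corner :: "nat list \<Rightarrow> nat \<Rightarrow> nat list" where
  "remove_corner lam r = lam[r := lam ! r - 1]"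

lemma is_partition_nth_antimono:
  assumes "is_partition lam" "i \<le> j" "j < length lam"
  shows "lam ! j \<le> lam ! i"
  using assms(2,3)
proof (induction j rule: dec_induct)
  case (step j)
  then show ?case
    using assms(1) unfolding is_partition_def by (meson Suc_lessD le_trans)
qed simp

lemma sum_list_ge_2_if_lower_corner:
  assumes "is_partition lam" "is_corner lam r" "0 < r"
  shows "2 \<le> sum_list lam"
proof -
  obtain a xs where lam: "lam = a # xs"
    using assms(2) by (cases lam) (auto simp: is_corner_def)
  have "0 < lam ! r" and "lam ! r \<le> lam ! 0"
    using assms is_partition_nth_antimono[OF assms(1), of 0 r] by (auto simp: is_corner_def)
  moreover have "lam ! r \<le> sum_list xs"
    using assms(2,3) elem_le_sum_list[of "r - 1" xs] by (auto simp: is_corner_def lam)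
  ultimately show ?thesis
    by (simp add: lam)
qed

lemma corner_cell_in_cells: "is_corner lam r \<Longrightarrow> corner_cell lam r \<in> cells lam"
  by (auto simp: is_corner_def cells_def)

lemma cells_remove_corner:
  "is_corner lam r \<Longrightarrow> cells (remove_corner lam r) = cells lam - {corner_cell lam r}"
  by (auto simp: is_corner_def cells_def remove_corner_def nth_list_update split: if_splits)

lemma sum_list_remove_corner:
  "is_corner lam r \<Longrightarrow> sum_list (remove_corner lam r) = sum_list lam - 1"
  using sum_list_update[of r lam "lam ! r - 1"] elem_le_sum_list[of r lam]
  by (simp add: is_corner_def remove_corner_def)

lemma is_partition_remove_corner:
  "is_partition lam \<Longrightarrow> is_corner lam r \<Longrightarrow> is_partition (remove_corner lam r)"
  by (auto simp: is_partition_def is_corner_def remove_corner_def nth_list_update)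

lemma length_remove_corner [simp]: "length (remove_corner lam r) = length lam"
  by (simp add: remove_corner_def)

lemma remove_corner_nth_0:
  "is_corner lam r \<Longrightarrow> remove_corner lam r ! 0 = (if r = 0 then lam ! 0 - 1 else lam ! 0)"
  by (simp add: is_corner_def remove_corner_def nth_list_update)

lemma finite_cells: "finite (cells lam)"
proof (rule finite_subset)
  show "cells lam \<subseteq> {..<length lam} \<times> {..<sum_list lam}"
    using elem_le_sum_list[of _ lam] by (fastforce simp: cells_def)
qed simp

lemma syt_bij_betw: "T \<in> syt lam \<Longrightarrow> bij_betw T (cells lam) {1..sum_list lam}"
  by (simp add: syt_def)

lemma syt_outside: "T \<in> syt lam \<Longrightarrow> x \<notin> cells lam \<Longrightarrow> T x = 0"
  by (cases x) (simp add: syt_def)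

lemma syt_row_less: "T \<in> syt lam \<Longrightarrow> (r, Suc c) \<in> cells lam \<Longrightarrow> T (r, c) < T (r, Suc c)"
  by (simp add: syt_def)

lemma syt_col_less: "T \<in> syt lam \<Longrightarrow> (Suc r, c) \<in> cells lam \<Longrightarrow> T (r, c) < T (Suc r, c)"
  by (simp add: syt_def)

lemma finite_syt: "finite (syt lam)"
proof (rule finite_subset)
  show "syt lam \<subseteq> {T. \<forall>x. (x \<in> cells lam \<longrightarrow> T x \<in> {1..sum_list lam}) \<and> (x \<notin> cells lam \<longrightarrow> T x = 0)}"
    using syt_outside bij_betw_apply[OF syt_bij_betw] by blast
  show "finite \<dots>"
    by (rule finite_set_of_finite_funs) (simp_all add: finite_cells)
qed

lemma syt_the_inv_into:
  assumes "T \<in> syt lam" "m \<in> {1..sum_list lam}"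
  shows "the_inv_into (cells lam) T m \<in> cells lam" and "T (the_inv_into (cells lam) T m) = m"
  using syt_bij_betw[OF assms(1)] assms(2)
  by (auto simp: bij_betw_def intro: the_inv_into_into f_the_inv_into_f)

lemma syt_max_at_corner:
  assumes T: "T \<in> syt lam" and N: "sum_list lam = Suc M"
  defines "x \<equiv> the_inv_into (cells lam) T (Suc M)"
  shows "is_corner lam (fst x)" and "x = corner_cell lam (fst x)" and "T x = Suc M"
proof -
  have "x \<in> cells lam" and Tx: "T x = Suc M"
    using syt_the_inv_into[OF T, of "Suc M"] N by (auto simp: x_def)
  then obtain r s where x: "x = (r, s)" "r < length lam" "s < lam ! r"
    by (auto simp: cells_def)
  have entry_le: "T y \<le> Suc M" if "y \<in> cells lam" for y
    using bij_betw_apply[OF syt_bij_betw[OF T] that] N by simp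
  have "(r, Suc s) \<notin> cells lam"
    using syt_row_less[OF T] entry_le Tx x(1) by fastforce
  then have s: "s = lam ! r - 1"
    using x by (auto simp: cells_def)
  have "(Suc r, s) \<notin> cells lam"
    using syt_col_less[OF T] entry_le Tx x(1) by fastforce
  then have "Suc r < length lam \<longrightarrow> lam ! Suc r < lam ! r"
    using x s by (auto simp: cells_def)
  then show "is_corner lam (fst x)" and "x = corner_cell lam (fst x)"
    using x s by (auto simp: is_corner_def)
  show "T x = Suc M" by (fact Tx)
qed

lemma corner_cell_neighbours:
  assumes "is_corner lam r"
  shows "(r, Suc (lam ! r - 1)) \<notin> cells lam" and "(Suc r, lam ! r - 1) \<notin> cells lam"
  using assms by (auto simp: is_corner_def cells_def)

lemma bij_betw_fun_upd_outside: "x \<notin> A \<Longrightarrow> bij_betw (f(x := y)) A B \<longleftrightarrow> bij_betw f A B"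
  by (rule bij_betw_cong) auto

lemma syt_remove_max:
  assumes T: "T \<in> syt lam" and c: "is_corner lam r" and Tx: "T (corner_cell lam r) = sum_list lam"
  shows "T(corner_cell lam r := 0) \<in> syt (remove_corner lam r)"
proof -
  let ?x = "corner_cell lam r"
  have cells': "cells (remove_corner lam r) = cells lam - {?x}"
    by (rule cells_remove_corner[OF c])
  have "bij_betw T (cells lam - {?x}) ({1..sum_list lam} - {sum_list lam})"
    using bij_betw_DiffI[OF syt_bij_betw[OF T], of "{?x}" "{sum_list lam}"] Tx
      corner_cell_in_cells[OF c] bij_betw_apply[OF syt_bij_betw[OF T] corner_cell_in_cells[OF c]]
    by simp
  moreover have "{1..sum_list lam} - {sum_list lam} = {1..sum_list lam - 1}"
    by auto
  ultimately have "bij_betw (T(?x := 0)) (cells (remove_corner lam r)) {1..sum_list (remove_corner lam r)}"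
    unfolding cells' sum_list_remove_corner[OF c] by (simp add: bij_betw_fun_upd_outside)
  moreover have "(r', c') \<noteq> ?x" if "(r', Suc c') \<in> cells lam \<or> (Suc r', c') \<in> cells lam" for r' c'
    using that corner_cell_neighbours[OF c] by auto
  ultimately show ?thesis
    unfolding syt_def cells'
    using syt_outside[OF T] syt_row_less[OF T] syt_col_less[OF T] by (intro CollectI conjI allI impI) auto
qed

lemma syt_add_max:
  assumes T': "T' \<in> syt (remove_corner lam r)" and p: "is_partition lam" and c: "is_corner lam r"
    and N: "sum_list lam = Suc M"
  shows "T'(corner_cell lam r := Suc M) \<in> syt lam"
proof -
  let ?x = "corner_cell lam r" and ?T = "T'(corner_cell lam r := Suc M)"
  have cells': "cells (remove_corner lam r) = cells lam - {?x}"
    by (rule cells_remove_corner[OF c])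
  have M: "sum_list (remove_corner lam r) = M"
    using sum_list_remove_corner[OF c] N by simp
  have x: "?x \<in> cells lam"
    by (rule corner_cell_in_cells[OF c])
  have small: "?T y < Suc M" if "y \<in> cells lam" "y \<noteq> ?x" for y
    using bij_betw_apply[OF syt_bij_betw[OF T'], of y] that cells' M by auto
  have "bij_betw ?T (cells lam - {?x}) {1..M}"
    using syt_bij_betw[OF T'] unfolding cells' M by (simp add: bij_betw_fun_upd_outside)
  then have "bij_betw ?T ((cells lam - {?x}) \<union> {?x}) ({1..M} \<union> {?T ?x})"
    by (intro notIn_Un_bij_betw) simp_all
  moreover have "(cells lam - {?x}) \<union> {?x} = cells lam" and "{1..M} \<union> {?T ?x} = {1..sum_list lam}"
    using x N by auto
  ultimately have "bij_betw ?T (cells lam) {1..sum_list lam}"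
    by simp
  moreover have "\<forall>y. y \<notin> cells lam \<longrightarrow> ?T y = 0"
    using syt_outside[OF T'] x unfolding cells' by auto
  moreover have "?T (r', c') < ?T (r', Suc c')" if "(r', Suc c') \<in> cells lam" for r' c'
  proof -
    have "(r', c') \<in> cells lam" "(r', c') \<noteq> ?x"
      using that corner_cell_neighbours[OF c] by (auto simp: cells_def)
    then show ?thesis
      using that small syt_row_less[OF T', of r' c'] unfolding cells' by (cases "(r', Suc c') = ?x") auto
  qed
  moreover have "?T (r', c') < ?T (Suc r', c')" if "(Suc r', c') \<in> cells lam" for r' c'
  proof -
    have "(r', c') \<in> cells lam" "(r', c') \<noteq> ?x"
      using that p corner_cell_neighbours[OF c] by (auto simp: cells_def is_partition_def)
    then show ?thesis
      using that small syt_col_less[OF T', of r' c'] unfolding cells' by (cases "(Suc r', c') = ?x") auto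
  qed
  ultimately show ?thesis
    unfolding syt_def by blast
qed

lemma row_of_add_max:
  assumes T': "T' \<in> syt (remove_corner lam r)" and p: "is_partition lam" and c: "is_corner lam r"
    and N: "sum_list lam = Suc M"
  shows "row_of lam (T'(corner_cell lam r := Suc M)) (Suc M) = r"
    and "m \<in> {1..M} \<Longrightarrow> row_of lam (T'(corner_cell lam r := Suc M)) m = row_of (remove_corner lam r) T' m"
proof -
  let ?x = "corner_cell lam r" and ?T = "T'(corner_cell lam r := Suc M)"
  have inj: "inj_on ?T (cells lam)"
    using syt_bij_betw[OF syt_add_max[OF T' p c N]] by (simp add: bij_betw_def)
  have x: "?x \<in> cells lam"
    by (rule corner_cell_in_cells[OF c])
  show "row_of lam ?T (Suc M) = r"
    unfolding row_of_def using the_inv_into_f_eq[OF inj _ x] by simp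
  assume "m \<in> {1..M}"
  then have "m \<in> {1..sum_list (remove_corner lam r)}"
    using sum_list_remove_corner[OF c] N by simp
  note y = syt_the_inv_into[OF T' this]
  then have "the_inv_into (cells lam) ?T m = the_inv_into (cells (remove_corner lam r)) T' m"
    using cells_remove_corner[OF c] by (intro the_inv_into_f_eq[OF inj]) auto
  then show "row_of lam ?T m = row_of (remove_corner lam r) T' m"
    by (simp add: row_of_def)
qed

lemma descents_add_max:
  assumes T': "T' \<in> syt (remove_corner lam r)" and p: "is_partition lam" and c: "is_corner lam r"
    and N: "sum_list lam = Suc M"
  shows "descents lam (T'(corner_cell lam r := Suc M)) = descents (remove_corner lam r) T'
     \<union> (if 1 \<le> M \<and> row_of (remove_corner lam r) T' M < r then {M} else {})"
proof -
  have M: "sum_list (remove_corner lam r) = M"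
    using sum_list_remove_corner[OF c] N by simp
  note rows = row_of_add_max[OF assms]
  show ?thesis
  proof (rule set_eqI)
    fix m
    consider "m < M" | "m = M" | "M < m" by linarith
    then show "m \<in> descents lam (T'(corner_cell lam r := Suc M)) \<longleftrightarrow>
        m \<in> descents (remove_corner lam r) T' \<union>
          (if 1 \<le> M \<and> row_of (remove_corner lam r) T' M < r then {M} else {})"
      by cases (use rows(1) rows(2)[of m] rows(2)[of "Suc m"] N M in \<open>auto simp: descents_def\<close>)
  qed
qed

lemma descents_subset: "descents lam T \<subseteq> {1..<sum_list lam}"
  by (auto simp: descents_def)

lemma finite_descents: "finite (descents lam T)"
  using descents_subset finite_subset by blast

lemma des_maj_add_max:
  assumes T': "T' \<in> syt (remove_corner lam r)" and p: "is_partition lam" and c: "is_corner lam r"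
    and N: "sum_list lam = Suc M"
  defines "new \<equiv> 1 \<le> M \<and> row_of (remove_corner lam r) T' M < r"
  shows "des lam (T'(corner_cell lam r := Suc M)) = des (remove_corner lam r) T' + (if new then 1 else 0)"
    and "maj lam (T'(corner_cell lam r := Suc M)) = maj (remove_corner lam r) T' + (if new then M else 0)"
proof -
  have "M \<notin> descents (remove_corner lam r) T'"
    using sum_list_remove_corner[OF c] N by (simp add: descents_def)
  then show "des lam (T'(corner_cell lam r := Suc M)) = des (remove_corner lam r) T' + (if new then 1 else 0)"
    and "maj lam (T'(corner_cell lam r := Suc M)) = maj (remove_corner lam r) T' + (if new then M else 0)"
    unfolding des_def maj_def descents_add_max[OF assms(1-4)] new_def
    using finite_descents by auto
qed

lemma syt_eq_UN_add_max:
  assumes p: "is_partition lam" and N: "sum_list lam = Suc M"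
  shows "syt lam = (\<Union>r\<in>{r. is_corner lam r}. (\<lambda>T'. T'(corner_cell lam r := Suc M)) ` syt (remove_corner lam r))"
proof (intro equalityI subsetI)
  fix T assume T: "T \<in> syt lam"
  define x where "x = the_inv_into (cells lam) T (Suc M)"
  note max = syt_max_at_corner[OF T N, folded x_def]
  then have "T(x := 0) \<in> syt (remove_corner lam (fst x))"
    using syt_remove_max[OF T max(1)] N by simp
  moreover have "T = (T(x := 0))(x := Suc M)"
    using max(3) by auto
  ultimately show "T \<in> (\<Union>r\<in>{r. is_corner lam r}. (\<lambda>T'. T'(corner_cell lam r := Suc M)) ` syt (remove_corner lam r))"
    using max(1,2) by (metis (mono_tags, lifting) UN_iff image_eqI mem_Collect_eq)
qed (use syt_add_max[OF _ p _ N] in blast)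

lemma sum_syt_add_max:
  assumes p: "is_partition lam" and N: "sum_list lam = Suc M"
  shows "(\<Sum>T\<in>syt lam. h T)
    = (\<Sum>r | is_corner lam r. \<Sum>T'\<in>syt (remove_corner lam r). h (T'(corner_cell lam r := Suc M)))"
proof -
  let ?add = "\<lambda>r T'. T'(corner_cell lam r := Suc M)"
  have "finite {r. is_corner lam r}"
    by (rule finite_subset[of _ "{..<length lam}"]) (auto simp: is_corner_def)
  moreover have "?add r1 ` syt (remove_corner lam r1) \<inter> ?add r2 ` syt (remove_corner lam r2) = {}"
    if "is_corner lam r1" "is_corner lam r2" "r1 \<noteq> r2" for r1 r2
  proof (rule equals0I)
    fix T assume "T \<in> ?add r1 ` syt (remove_corner lam r1) \<inter> ?add r2 ` syt (remove_corner lam r2)"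
    then obtain T1 T2 where "T1 \<in> syt (remove_corner lam r1)" "T2 \<in> syt (remove_corner lam r2)"
      and "T = ?add r1 T1" "T = ?add r2 T2"
      by blast
    then have "r1 = r2"
      using row_of_add_max(1)[OF _ p that(1) N] row_of_add_max(1)[OF _ p that(2) N] by metis
    with that(3) show False ..
  qed
  ultimately have "(\<Sum>T\<in>syt lam. h T) = (\<Sum>r | is_corner lam r. sum h (?add r ` syt (remove_corner lam r)))"
    unfolding syt_eq_UN_add_max[OF p N] by (intro sum.UNION_disjoint) (auto simp: finite_syt)
  moreover have "inj_on (?add r) (syt (remove_corner lam r))" if c: "is_corner lam r" for r
  proof (rule inj_onI)
    fix T1 T2 assume T: "T1 \<in> syt (remove_corner lam r)" "T2 \<in> syt (remove_corner lam r)"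
      and eq: "?add r T1 = ?add r T2"
    have "corner_cell lam r \<notin> cells (remove_corner lam r)"
      using cells_remove_corner[OF c] by simp
    then have "T1 (corner_cell lam r) = T2 (corner_cell lam r)"
      using syt_outside[OF T(1)] syt_outside[OF T(2)] by simp
    then show "T1 = T2"
      using eq by (metis fun_upd_triv fun_upd_upd)
  qed
  ultimately show ?thesis
    by (simp add: sum.reindex)
qed

lemma remove_corner_smaller_partition:
  assumes "is_partition lam" "is_corner lam r" "sum_list lam = Suc M"
  shows "sum_list (remove_corner lam r) = M" "is_partition (remove_corner lam r)" "remove_corner lam r \<noteq> []"
  using assms sum_list_remove_corner[of lam r] is_partition_remove_corner[of lam r]
  by (auto simp: is_corner_def simp flip: length_0_conv)

section \<open>Tableaux with the maximal number of descents\<close>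

lemma des_le:
  assumes "is_partition lam" "lam \<noteq> []" "T \<in> syt lam"
  shows "des lam T + lam ! 0 \<le> sum_list lam"
  using assms
proof (induction "sum_list lam" arbitrary: lam T)
  case 0
  have "descents lam T = {}"
    using descents_subset[of lam T] unfolding "0.hyps"[symmetric] by simp
  then show ?case
    using 0 elem_le_sum_list[of 0 lam] by (simp add: des_def)
next
  case (Suc M)
  note N = Suc.hyps(2)[symmetric]
  from Suc.prems(3) obtain r T' where c: "is_corner lam r" and T': "T' \<in> syt (remove_corner lam r)"
    and T: "T = T'(corner_cell lam r := Suc M)"
    unfolding syt_eq_UN_add_max[OF Suc.prems(1) N] by blast
  note lam' = remove_corner_smaller_partition[OF Suc.prems(1) c N]
  have "des (remove_corner lam r) T' + remove_corner lam r ! 0 \<le> M"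
    using Suc.hyps(1)[OF lam'(1)[symmetric] lam'(2,3) T'] lam'(1) by simp
  moreover have "des lam T \<le> des (remove_corner lam r) T' + (if r = 0 then 0 else 1)"
    using des_maj_add_max(1)[OF T' Suc.prems(1) c N] T by auto
  ultimately show ?case
    using remove_corner_nth_0[OF c] c N by (auto simp: is_corner_def split: if_splits)
qed

definition has_max_des :: "nat list \<Rightarrow> (nat \<times> nat \<Rightarrow> nat) \<Rightarrow> bool" where
  "has_max_des lam T \<longleftrightarrow> des lam T + lam ! 0 = sum_list lam"

lemma has_max_des_add_max:
  assumes T': "T' \<in> syt (remove_corner lam r)" and p: "is_partition lam" and c: "is_corner lam r"
    and N: "sum_list lam = Suc M"
  shows "has_max_des lam (T'(corner_cell lam r := Suc M))
    \<longleftrightarrow> has_max_des (remove_corner lam r) T' \<and> (r \<noteq> 0 \<longrightarrow> row_of (remove_corner lam r) T' M < r)"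
proof -
  note lam' = remove_corner_smaller_partition[OF p c N]
  have "des (remove_corner lam r) T' + remove_corner lam r ! 0 \<le> M"
    using des_le[OF lam'(2,3) T'] lam'(1) by simp
  moreover have "r \<noteq> 0 \<Longrightarrow> 1 \<le> M"
    using sum_list_ge_2_if_lower_corner[OF p c] N by simp
  ultimately show ?thesis
    using des_maj_add_max(1)[OF assms] remove_corner_nth_0[OF c] lam'(1) N c
    by (cases "r = 0") (auto simp: has_max_des_def is_corner_def)
qed

text \<open>The row condition P on the largest entry is what makes the recursion close: re-inserting
  the largest entry in row r creates a descent iff the previous largest entry lies above row r.\<close>

definition max_des_gf :: "nat list \<Rightarrow> (nat \<Rightarrow> bool) \<Rightarrow> rat poly" where
  "max_des_gf lam P = (\<Sum>T\<in>syt lam.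
     if has_max_des lam T \<and> P (row_of lam T (sum_list lam)) then monom 1 (maj lam T) else 0)"

lemma max_des_gf_remove_max:
  assumes p: "is_partition lam" and N: "sum_list lam = Suc M"
  shows "max_des_gf lam P = (\<Sum>r | is_corner lam r. if \<not> P r then 0
     else if r = 0 then max_des_gf (remove_corner lam 0) (\<lambda>_. True)
     else monom 1 M * max_des_gf (remove_corner lam r) (\<lambda>s. s < r))"
  unfolding max_des_gf_def[of lam P] sum_syt_add_max[OF p N]
proof (rule sum.cong[OF refl])
  fix r assume "r \<in> {r. is_corner lam r}"
  then have c: "is_corner lam r" by simp
  let ?lam' = "remove_corner lam r" and ?T = "\<lambda>T'. T'(corner_cell lam r := Suc M)"
  have M: "sum_list ?lam' = M"
    using remove_corner_smaller_partition[OF p c N] by simp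
  have "r \<noteq> 0 \<Longrightarrow> 1 \<le> M"
    using sum_list_ge_2_if_lower_corner[OF p c] N by simp
  then have summand: "(if has_max_des lam (?T T') \<and> P (row_of lam (?T T') (sum_list lam))
        then monom (1::rat) (maj lam (?T T')) else 0)
      = (if \<not> P r then 0
         else if r = 0 then (if has_max_des ?lam' T' then monom 1 (maj ?lam' T') else 0)
         else monom 1 M * (if has_max_des ?lam' T' \<and> row_of ?lam' T' M < r
           then monom 1 (maj ?lam' T') else 0))" if T': "T' \<in> syt ?lam'" for T'
    using has_max_des_add_max[OF T' p c N] row_of_add_max(1)[OF T' p c N]
      des_maj_add_max(2)[OF T' p c N] N
    by (auto simp: mult_monom add.commute)
  have "(\<Sum>T'\<in>syt ?lam'. if has_max_des lam (?T T') \<and> P (row_of lam (?T T') (sum_list lam))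
        then monom (1::rat) (maj lam (?T T')) else 0)
      = (\<Sum>T'\<in>syt ?lam'. if \<not> P r then 0
         else if r = 0 then (if has_max_des ?lam' T' then monom 1 (maj ?lam' T') else 0)
         else monom 1 M * (if has_max_des ?lam' T' \<and> row_of ?lam' T' M < r
           then monom 1 (maj ?lam' T') else 0))" (is "?S = _")
    by (rule sum.cong[OF refl summand])
  also have "\<dots> = (if \<not> P r then 0
         else if r = 0 then max_des_gf ?lam' (\<lambda>_. True)
         else monom 1 M * max_des_gf ?lam' (\<lambda>s. s < r))"
    unfolding max_des_gf_def M by (simp add: sum_distrib_left)
  also have "\<dots> = (if \<not> P r then 0
         else if r = 0 then max_des_gf (remove_corner lam 0) (\<lambda>_. True)
         else monom 1 M * max_des_gf ?lam' (\<lambda>s. s < r))"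
    by simp
  finally show "?S = \<dots>" .
qed

lemma syt_sum_list_0:
  assumes "sum_list lam = 0"
  shows "syt lam = {\<lambda>_. 0}"
proof -
  have cells: "cells lam = {}"
  proof (rule equals0I)
    fix x assume "x \<in> cells lam"
    then obtain r c where "r < length lam" "c < lam ! r"
      by (auto simp: cells_def)
    then show False
      using elem_le_sum_list[of r lam] assms by simp
  qed
  show ?thesis
  proof (intro equalityI subsetI)
    fix T assume "T \<in> syt lam"
    then show "T \<in> {\<lambda>_. 0}"
      using syt_outside cells by fastforce
  next
    fix T :: "nat \<times> nat \<Rightarrow> nat" assume "T \<in> {\<lambda>_. 0}"
    then show "T \<in> syt lam"
      using cells assms by (simp add: syt_def bij_betw_def)
  qed
qed

lemma max_des_gf_sum_list_0:
  assumes "sum_list lam = 0" "lam \<noteq> []"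
  shows "max_des_gf lam (\<lambda>_. True) = 1"
proof -
  have "descents lam (\<lambda>_. 0) = {}"
    using descents_subset[of lam "\<lambda>_. 0"] unfolding assms(1) by simp
  moreover have "lam ! 0 = 0"
    using assms elem_le_sum_list[of 0 lam] by simp
  ultimately have "has_max_des lam (\<lambda>_. 0)" and "maj lam (\<lambda>_. 0) = 0"
    using assms(1) by (simp_all add: has_max_des_def des_def maj_def)
  then show ?thesis
    by (simp add: max_des_gf_def syt_sum_list_0[OF assms(1)])
qed

section \<open>Three-row shapes\<close>

lemma is_partition_3: "c \<le> b \<Longrightarrow> b \<le> a \<Longrightarrow> is_partition [a, b, c]"
  by (auto simp: is_partition_def less_Suc_eq)

lemma sum_corners_3:
  "(\<Sum>r | is_corner [a, b, c] r. f r)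
    = (if b < a then f 0 else 0) + (if c < b then f 1 else 0) + (if 0 < c then f 2 else 0)"
proof -
  have corners: "{r. is_corner [a, b, c] r} = {r \<in> {0, 1, 2}. is_corner [a, b, c] r}"
    by (auto simp: is_corner_def less_Suc_eq)
  have "(\<Sum>r | is_corner [a, b, c] r. f r) = (\<Sum>r\<in>{0, 1, 2::nat}. if is_corner [a, b, c] r then f r else 0)"
    unfolding corners by (rule sum.inter_filter) simp
  then show ?thesis
    by (simp add: is_corner_def add.assoc)
qed

lemma max_des_gf_3:
  assumes "c \<le> b" "b \<le> Suc m"
  shows "max_des_gf [Suc m, b, c] P
    = (if b \<le> m \<and> P 0 then max_des_gf [m, b, c] (\<lambda>_. True) else 0)
      + (if c < b \<and> P 1 then monom 1 (m + b + c) * max_des_gf [Suc m, b - 1, c] (\<lambda>s. s < 1) else 0)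
      + (if 0 < c \<and> P 2 then monom 1 (m + b + c) * max_des_gf [Suc m, b, c - 1] (\<lambda>s. s < 2) else 0)"
  using max_des_gf_remove_max[OF is_partition_3[OF assms], of "m + b + c"]
  by (simp add: sum_corners_3 remove_corner_def)

lemma max_des_gf_3_row_0:
  assumes "c \<le> b" "b \<le> Suc m"
  shows "max_des_gf [Suc m, b, c] (\<lambda>s. s < 1) = (if b \<le> m then max_des_gf [m, b, c] (\<lambda>_. True) else 0)"
  using max_des_gf_3[OF assms] by simp

lemma max_des_gf_3_rows_0_1:
  assumes "c < b" "b \<le> Suc m"
  shows "max_des_gf [Suc m, b, c] (\<lambda>s. s < 2)
    = (if b \<le> m then max_des_gf [m, b, c] (\<lambda>_. True) else 0)
      + monom 1 (m + b + c) * max_des_gf [m, b - 1, c] (\<lambda>_. True)"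
  using max_des_gf_3[OF less_imp_le[OF assms(1)] assms(2)] max_des_gf_3_row_0[of c "b - 1" m] assms
  by simp

lemma max_des_gf_3_eq_qdet:
  "c \<le> b \<Longrightarrow> b \<le> a \<Longrightarrow> max_des_gf [a, b, c] (\<lambda>_. True) = qdet a (int b) (int c)"
proof (induction a arbitrary: b c)
  case 0
  then show ?case
    by (simp add: max_des_gf_sum_list_0 qdet_0_0_0)
next
  case (Suc m)
  have step: "(if b' \<le> m then max_des_gf [m, b', c'] (\<lambda>_. True) else 0) = qdet m (int b') (int c')"
    if "c' \<le> b'" "b' \<le> Suc m" for b' c'
  proof (cases "b' \<le> m")
    case True
    then show ?thesis using Suc.IH[OF that(1) True] by simp
  next
    case False
    with that(2) have "int b' = int m + 1" by simp
    with False show ?thesis by (simp add: qdet_row_overflow)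
  qed
  have "max_des_gf [Suc m, b, c] (\<lambda>_. True) = qdet m (int b) (int c)
      + (if c < b then monom 1 (m + b + c) * qdet m (int b - 1) (int c) else 0)
      + (if 0 < c then monom 1 (m + b + c) * (qdet m (int b) (int c - 1)
           + monom 1 (m + b + c - 1) * qdet m (int b - 1) (int c - 1)) else 0)"
    using Suc.prems
    by (simp add: max_des_gf_3 max_des_gf_3_row_0 max_des_gf_3_rows_0_1 step of_nat_diff) arith
  then show ?case
    by (simp only: qdet_Suc_nat[OF Suc.prems(1)])
qed

lemma fpoly_eq_max_des_gf:
  assumes "lam \<noteq> []"
  shows "fpoly lam (sum_list lam - lam ! 0) = max_des_gf lam (\<lambda>_. True)"
proof -
  have "lam ! 0 \<le> sum_list lam"
    using assms by (simp add: elem_le_sum_list)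
  then have "des lam T = sum_list lam - lam ! 0 \<longleftrightarrow> has_max_des lam T" for T
    by (auto simp: has_max_des_def)
  then show ?thesis
    unfolding fpoly_def max_des_gf_def by (simp add: sum.inter_filter[OF finite_syt])
qed

theorem mainTheorem8:
  fixes n j k :: nat
  assumes "j \<le> n" and "k \<le> j"
  shows "fpoly [n, j, k] (j + k) =
    monom 1 (j^2 + j*k + k^2) *
      (qbinom (int n) (int j) * qbinom (int n) (int k)
       - monom 1 (j - k + 1) * qbinom (int n) (int j + 1) * qbinom (int n) (int k - 1))"
proof -
  let ?E = "j\<^sup>2 + j * k + k\<^sup>2"
  have E: "nat ((int j)\<^sup>2 + int j * int k + (int k)\<^sup>2) = ?E"
    by (metis nat_int of_nat_add of_nat_mult of_nat_power)
  have "(int j + 1)\<^sup>2 + (int j + 1) * (int k - 1) + (int k - 1)\<^sup>2 = int (?E + (j - k + 1))"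
    using assms(2) by (simp add: of_nat_diff power2_eq_square algebra_simps)
  then have E': "nat ((int j + 1)\<^sup>2 + (int j + 1) * (int k - 1) + (int k - 1)\<^sup>2) = ?E + (j - k + 1)"
    by (simp only: nat_int)
  have "fpoly [n, j, k] (j + k) = qdet n (int j) (int k)"
    using fpoly_eq_max_des_gf[of "[n, j, k]"] max_des_gf_3_eq_qdet[OF assms(2,1)] by simp
  also have "\<dots> = monom 1 ?E * qbinom (int n) (int j) * qbinom (int n) (int k)
      - (monom 1 ?E * monom 1 (j - k + 1)) * qbinom (int n) (int j + 1) * qbinom (int n) (int k - 1)"
    unfolding qdet_def qterm_def E E' mult_monom by simp
  finally show ?thesis
    by (simp add: algebra_simps)
qed

end
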